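(* Let $a,b,c$ be positive numbers with $a<b<c$; set $c_0=c-\lfloor c/b\rfloor b$, $(c_0+a-b)_+=\max(c_0+a-b,0)$ and $c_0\wedge a=\min(c_0,a)$. Define $\lambda_{a,b,c}(t)=\lfloor c/b\rfloor b+b$ for $t\in[0,(c_0+a-b)_+)+a\mathbb Z$, $\lambda_{a,b,c}(t)=0$ for $t\in[(c_0+a-b)_+,c_0\wedge a)+a\mathbb Z$, $\lambda_{a,b,c}(t)=\lfloor c/b\rfloor b$ for $t\in[c_0\wedge a,a)+a\mathbb Z$; and $\tilde\lambda_{a,b,c}(t)=-\lfloor c/b\rfloor b-b$ for $t\in[c-(c_0+a-b)_+,c)+a\mathbb Z$, $\tilde\lambda_{a,b,c}(t)=0$ for $t\in[c-c_0\wedge a,c-(c_0+a-b)_+)+a\mathbb Z$, $\tilde\lambda_{a,b,c}(t)=-\lfloor c/b\rfloor b$ for $t\in[c-a,c-c_0\wedge a)+a\mathbb Z$. Then $$\mathcal S_{a,b,c}\cap\Big(\big([(c_0+a-b)_+,c_0\wedge a)\cup[c-c_0\wedge a,c-(c_0+a-b)_+)\big)+a\mathbb Z\Big)=\emptyset,$$ and for every $t\in\mathcal S_{a,b,c}$ and every $\mathbf x\in\mathcal B_b^0$ with $\mathbf M_{a,b,c}(t)\mathbf x=\mathbf 1$ one has $\mathbf x(\lambda)=1$ for $\lambda\in\{\lambda_{a,b,c}(t),0,\tilde\lambda_{a,b,c}(t)\}$ and $\mathbf x(\lambda)=0$ for all $\lambda\in b\mathbb Z$ with $\tilde\lambda_{a,b,c}(t)<\lambda<\lambda_{a,b,c}(t)$,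 $\lambda\ne0$.
   Context: For $a,b,c>0$ and $t\in\mathbb R$, $\mathbf M_{a,b,c}(t)=(\chi_{[0,c)}(t-\mu+\lambda))_{\mu\in a\mathbb Z,\lambda\in b\mathbb Z}$ is the infinite matrix with rows indexed by $a\mathbb Z$ and columns by $b\mathbb Z$, acting by $(\mathbf M_{a,b,c}(t)\mathbf x)(\mu)=\sum_{\lambda\in b\mathbb Z}\chi_{[0,c)}(t-\mu+\lambda)\mathbf x(\lambda)$. $\mathcal B_b$ is the set of vectors $(\mathbf x(\lambda))_{\lambda\in b\mathbb Z}$ with entries in $\{0,1\}$, and $\mathcal B_b^0=\{\mathbf x\in\mathcal B_b:\mathbf x(0)=1\}$. $\mathbf 1$ denotes the vector indexed by $a\mathbb Z$ all of whose entries are $1$. $\mathcal S_{a,b,c}=\{t\in\mathbb R:\mathbf M_{a,b,c}(t)\mathbf x=\mathbf 1\text{ for some }\mathbf x\in\mathcal B_b^0\}$. For $A\subset\mathbb R$, $A+a\mathbb Z=\{x+ak:x\in A,k\in\mathbb Z\}$. *)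

theory Defs
  imports Complex_Main
begin

text \<open>Vectors indexed by b\<int> are represented as functions x :: int \<Rightarrow> int, where
  x k stands for the entry x(b k).  Rows of M are indexed by a\<int>, row a m.\<close>

definition chi :: "real \<Rightarrow> real \<Rightarrow> int" where
  "chi c s = (if 0 \<le> s \<and> s < c then 1 else 0)"

text \<open>(M_{a,b,c}(t) x)(a m) = sum over \<lambda> = b k of chi_[0,c)(t - a m + b k) x(b k).
  Only finitely many terms are nonzero (those k in the set below), so the series is
  the finite sum over that set.\<close>
definition Mmul :: "real \<Rightarrow> real \<Rightarrow> real \<Rightarrow> real \<Rightarrow> (int \<Rightarrow> int) \<Rightarrow> int \<Rightarrow> int" where
  "Mmul a b c t x m =
     (\<Sum>k\<in>{k::int. 0 \<le> t - a * of_int m + b * of_int k \<and> t - a * of_int m + b * of_int k < c}.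
        chi c (t - a * of_int m + b * of_int k) * x k)"

definition Bb :: "(int \<Rightarrow> int) set" where
  "Bb = {x. \<forall>k. x k \<in> {0, 1}}"

definition Bb0 :: "(int \<Rightarrow> int) set" where
  "Bb0 = {x \<in> Bb. x 0 = 1}"

definition S_set :: "real \<Rightarrow> real \<Rightarrow> real \<Rightarrow> real set" where
  "S_set a b c = {t. \<exists>x\<in>Bb0. \<forall>m::int. Mmul a b c t x m = 1}"

definition plus_aZ :: "real set \<Rightarrow> real \<Rightarrow> real set" where
  "plus_aZ A a = {y + a * of_int k | y k. y \<in> A}"

definition c0 :: "real \<Rightarrow> real \<Rightarrow> real" where
  "c0 b c = c - of_int \<lfloor>c / b\<rfloor> * b"

definition pplus :: "real \<Rightarrow> real \<Rightarrow> real \<Rightarrow> real" where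
  "pplus a b c = max (c0 b c + a - b) 0"

definition cmin :: "real \<Rightarrow> real \<Rightarrow> real \<Rightarrow> real" where
  "cmin a b c = min (c0 b c) a"

text \<open>The three residue sets partition \<real> (for 0 < a < b), so the if-chains below
  define exactly the piecewise functions of the paper.\<close>
definition lam :: "real \<Rightarrow> real \<Rightarrow> real \<Rightarrow> real \<Rightarrow> real" where
  "lam a b c t =
     (if t \<in> plus_aZ {0..<pplus a b c} a then of_int \<lfloor>c / b\<rfloor> * b + b
      else if t \<in> plus_aZ {pplus a b c..<cmin a b c} a then 0
      else of_int \<lfloor>c / b\<rfloor> * b)"

definition lamt :: "real \<Rightarrow> real \<Rightarrow> real \<Rightarrow> real \<Rightarrow> real" where
  "lamt a b c t =
     (if t \<in> plus_aZ {c - pplus a b c..<c} a then - of_int \<lfloor>c / b\<rfloor> * b - b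
      else if t \<in> plus_aZ {c - cmin a b c..<c - pplus a b c} a then 0
      else - of_int \<lfloor>c / b\<rfloor> * b)"

end

theory Submission
  imports Defs
begin

text \<open>Every row of \<open>M(t) x = 1\<close> says that the window \<open>[a m - t, a m - t + c)\<close> contains exactly
  one position \<open>b k\<close> with \<open>x k = 1\<close>.  The window of a row that contains \<open>0\<close> must miss the
  nearest 1 on each side of \<open>0\<close>, whereas the window of the neighbouring row, shifted by \<open>a\<close>
  past \<open>0\<close>, must reach it.  This pins each neighbour into a half-open interval of length
  \<open>a < b\<close>, which contains at most one multiple of \<open>b\<close>: either \<open>\<lfloor>c/b\<rfloor> b\<close> or \<open>\<lfloor>c/b\<rfloor> b + b\<close>,
  depending on the residue of \<open>t\<close> mod \<open>a\<close>; residues in the excluded ranges would leave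
  the interval without any multiple of \<open>b\<close>.\<close>

lemma sum_zero_one_eq_one_imp_ex1:
  fixes f :: "'a \<Rightarrow> int"
  assumes f01: "\<And>k. f k \<in> {0, 1}" and sum: "sum f A = 1"
  shows "\<exists>!k. k \<in> A \<and> f k = 1"
proof -
  have "finite A" using sum by (metis sum.infinite zero_neq_one)
  have "sum f A = (\<Sum>k\<in>A. if f k = 1 then 1 else 0)"
    by (intro sum.cong refl) (metis f01 insert_iff singletonD)
  also have "\<dots> = of_nat (card {k \<in> A. f k = 1})"
    using sum.inter_filter[OF \<open>finite A\<close>, of "\<lambda>_. 1::int"] by simp
  finally have "card {k \<in> A. f k = 1} = 1" using sum by simp
  then obtain k where "{k \<in> A. f k = 1} = {k}" by (auto simp: card_1_singleton_iff)
  then show ?thesis by (metis (mono_tags, lifting) mem_Collect_eq singletonD singletonI)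
qed

lemma row_eq_one_imp_ex1_hit:
  assumes "x \<in> Bb" and "Mmul a b c t x m = 1"
  shows "\<exists>!k. 0 \<le> t - a * of_int m + b * of_int k \<and> t - a * of_int m + b * of_int k < c \<and> x k = 1"
proof -
  let ?W = "{k. 0 \<le> t - a * of_int m + b * of_int k \<and> t - a * of_int m + b * of_int k < c}"
  have "Mmul a b c t x m = sum x ?W"
    unfolding Mmul_def by (rule sum.cong) (auto simp: chi_def)
  then have "\<exists>!k. k \<in> ?W \<and> x k = 1"
    using assms by (intro sum_zero_one_eq_one_imp_ex1) (auto simp: Bb_def)
  then show ?thesis by simp
qed

lemma ex_least_pos_int:
  fixes P :: "int \<Rightarrow> bool"
  assumes "\<exists>k > 0. P k"
  obtains K where "0 < K" "P K" "\<And>k. 0 < k \<Longrightarrow> k < K \<Longrightarrow> \<not> P k"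
proof -
  have "\<exists>n::nat. n > 0 \<and> P (int n)" using assms by (metis of_nat_0_less_iff pos_int_cases)
  then obtain n :: nat where n: "n > 0 \<and> P (int n)" "\<And>j. j < n \<Longrightarrow> \<not> (j > 0 \<and> P (int j))"
    using exists_least_iff[of "\<lambda>n::nat. n > 0 \<and> P (int n)"] by blast
  have "\<not> P k" if "0 < k" "k < int n" for k
    using n(2)[of "nat k"] that by simp
  with n(1) show ?thesis using that[of "int n"] by simp
qed

lemma ex_greatest_neg_int:
  fixes P :: "int \<Rightarrow> bool"
  assumes "\<exists>k < 0. P k"
  obtains L where "L < 0" "P L" "\<And>k. L < k \<Longrightarrow> k < 0 \<Longrightarrow> \<not> P k"
proof -
  have "\<exists>k > 0. P (- k)" using assms by (metis neg_0_less_iff_less minus_minus)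
  then obtain K where K: "0 < K" "P (- K)" "\<And>k. 0 < k \<Longrightarrow> k < K \<Longrightarrow> \<not> P (- k)"
    using ex_least_pos_int[of "\<lambda>k. P (- k)"] by blast
  have "\<not> P k" if "- K < k" "k < 0" for k
    using K(3)[of "- k"] that by simp
  with K(1,2) show ?thesis using that[of "- K"] by simp
qed

lemma ex_int_shift_into_interval:
  fixes a t \<gamma> :: real
  assumes "0 < a"
  shows "\<exists>m::int. \<gamma> \<le> t - a * of_int m \<and> t - a * of_int m < \<gamma> + a"
proof -
  define m where "m = \<lfloor>(t - \<gamma>) / a\<rfloor>"
  have "of_int m \<le> (t - \<gamma>) / a" "(t - \<gamma>) / a < of_int m + 1" unfolding m_def by linarith+
  then have "\<gamma> \<le> t - a * of_int m \<and> t - a * of_int m < \<gamma> + a"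
    using assms by (auto simp: field_simps)
  then show ?thesis by blast
qed

lemma mem_plus_aZ_iff:
  assumes "0 < a" "\<gamma> \<le> \<alpha>" "\<beta> \<le> \<gamma> + a" "\<gamma> \<le> t - a * of_int m" "t - a * of_int m < \<gamma> + a"
  shows "t \<in> plus_aZ {\<alpha>..<\<beta>} a \<longleftrightarrow> \<alpha> \<le> t - a * of_int m \<and> t - a * of_int m < \<beta>"
proof
  assume "t \<in> plus_aZ {\<alpha>..<\<beta>} a"
  then obtain y k where t: "t = y + a * of_int k" "\<alpha> \<le> y" "y < \<beta>" unfolding plus_aZ_def by auto
  have "a * of_int (k - m) < a * 1" "a * (- 1) < a * of_int (k - m)"
    using t assms by (simp_all add: algebra_simps)
  then have "of_int (k - m) < (1::real)" "(- 1::real) < of_int (k - m)"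
    using \<open>0 < a\<close> mult_less_cancel_left_pos by blast+
  then have "k = m" by linarith
  then show "\<alpha> \<le> t - a * of_int m \<and> t - a * of_int m < \<beta>" using t by simp
next
  assume "\<alpha> \<le> t - a * of_int m \<and> t - a * of_int m < \<beta>"
  then show "t \<in> plus_aZ {\<alpha>..<\<beta>} a" unfolding plus_aZ_def
    by (intro CollectI exI[of _ "t - a * of_int m"] exI[of _ m]) auto
qed

lemma plus_aZ_Un: "plus_aZ (A \<union> B) a = plus_aZ A a \<union> plus_aZ B a"
  unfolding plus_aZ_def by blast

lemma ex_right_neighbour:
  assumes b: "0 < b" and "a < c" and x: "x \<in> Bb" and M: "\<forall>m. Mmul a b c t x m = 1"
    and x0: "x 0 = 1" and s: "0 \<le> t - a * of_int m" "t - a * of_int m < a"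
  obtains K where "0 < K" "x K = 1" "\<And>k. 0 < k \<Longrightarrow> k < K \<Longrightarrow> x k = 0"
    "c - (t - a * of_int m) \<le> b * of_int K" "b * of_int K < c + a - (t - a * of_int m)"
proof -
  obtain k where k: "0 \<le> t - a * of_int (m + 1) + b * of_int k"
      "t - a * of_int (m + 1) + b * of_int k < c" "x k = 1"
    using row_eq_one_imp_ex1_hit[OF x M[rule_format, of "m + 1"]] by blast
  have "0 < b * of_int k" using k(1) s by (simp add: algebra_simps)
  then have "0 < k" using b by (simp add: zero_less_mult_iff)
  then obtain K where K: "0 < K" "x K = 1" "\<And>j. 0 < j \<Longrightarrow> j < K \<Longrightarrow> x j \<noteq> 1"
    using k(3) ex_least_pos_int[of "\<lambda>j. x j = 1"] by blast
  have gap: "x j = 0" if "0 < j" "j < K" for j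
    using K(3)[OF that] x by (auto simp: Bb_def)
  have "K \<le> k" using K(3) \<open>0 < k\<close> k(3) by force
  then have "b * of_int K \<le> b * of_int k" using b by simp
  then have upper: "b * of_int K < c + a - (t - a * of_int m)" using k(2) by (simp add: algebra_simps)
  have lower: "c - (t - a * of_int m) \<le> b * of_int K"
  proof (rule ccontr)
    assume "\<not> ?thesis"
    moreover have "0 < b * of_int K" using b K by simp
    ultimately have "0 \<le> t - a * of_int m + b * of_int K \<and> t - a * of_int m + b * of_int K < c \<and> x K = 1"
      "0 \<le> t - a * of_int m + b * of_int 0 \<and> t - a * of_int m + b * of_int 0 < c \<and> x 0 = 1"
      using s \<open>a < c\<close> x0 K(2) by auto
    then have "K = 0" using row_eq_one_imp_ex1_hit[OF x M[rule_format, of m]] by blast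
    then show False using K by simp
  qed
  show ?thesis using that K(1,2) gap lower upper by blast
qed

lemma ex_left_neighbour:
  assumes b: "0 < b" and "a < c" and x: "x \<in> Bb" and M: "\<forall>m. Mmul a b c t x m = 1"
    and x0: "x 0 = 1" and s: "c - a \<le> t - a * of_int m" "t - a * of_int m < c"
  obtains L where "L < 0" "x L = 1" "\<And>k. L < k \<Longrightarrow> k < 0 \<Longrightarrow> x k = 0"
    "t - a * of_int m < - b * of_int L" "- b * of_int L \<le> t - a * of_int m + a"
proof -
  obtain k where k: "0 \<le> t - a * of_int (m - 1) + b * of_int k"
      "t - a * of_int (m - 1) + b * of_int k < c" "x k = 1"
    using row_eq_one_imp_ex1_hit[OF x M[rule_format, of "m - 1"]] by blast
  have "b * of_int k < 0" using k(2) s by (simp add: algebra_simps)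
  then have "k < 0" using b by (simp add: mult_less_0_iff)
  then obtain L where L: "L < 0" "x L = 1" "\<And>j. L < j \<Longrightarrow> j < 0 \<Longrightarrow> x j \<noteq> 1"
    using k(3) ex_greatest_neg_int[of "\<lambda>j. x j = 1"] by blast
  have gap: "x j = 0" if "L < j" "j < 0" for j
    using L(3)[OF that] x by (auto simp: Bb_def)
  have "k \<le> L" using L(3) \<open>k < 0\<close> k(3) by force
  then have "b * of_int k \<le> b * of_int L" using b by simp
  then have upper: "- b * of_int L \<le> t - a * of_int m + a" using k(1) by (simp add: algebra_simps)
  have lower: "t - a * of_int m < - b * of_int L"
  proof (rule ccontr)
    assume "\<not> ?thesis"
    moreover have "b * of_int L < 0" using b L by (simp add: mult_pos_neg)
    ultimately have "0 \<le> t - a * of_int m + b * of_int L \<and> t - a * of_int m + b * of_int L < c \<and> x L = 1"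
      "0 \<le> t - a * of_int m + b * of_int 0 \<and> t - a * of_int m + b * of_int 0 < c \<and> x 0 = 1"
      using s \<open>a < c\<close> x0 L(2) by auto
    then have "L = 0" using row_eq_one_imp_ex1_hit[OF x M[rule_format, of m]] by blast
    then show False using L by simp
  qed
  show ?thesis using that L(1,2) gap lower upper by blast
qed

lemma right_neighbour_position:
  fixes a b c s :: real and K :: int
  assumes "0 < a" "a < b" "0 \<le> s" "s < a" "c - s \<le> b * of_int K" "b * of_int K < c + a - s"
  shows "\<not> (pplus a b c \<le> s \<and> s < cmin a b c)"
    and "b * of_int K = (if s < pplus a b c then of_int \<lfloor>c / b\<rfloor> * b + b else of_int \<lfloor>c / b\<rfloor> * b)"
proof -
  define n where "n = \<lfloor>c / b\<rfloor>"
  have b: "0 < b" using assms by simp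
  have c: "of_int n * b \<le> c" "c < of_int n * b + b"
    using floor_divide_lower[OF b, of c] floor_divide_upper[OF b, of c]
    unfolding n_def by (simp_all add: algebra_simps)
  have "b * of_int (n - 1) < b * of_int K" "b * of_int K < b * of_int (n + 2)"
    using assms c by (simp_all add: algebra_simps)
  then have "n - 1 < K" "K < n + 2" using b by (simp_all add: mult_less_cancel_left_pos)
  then consider "K = n" | "K = n + 1" by linarith
  then have "\<not> (pplus a b c \<le> s \<and> s < cmin a b c) \<and>
    b * of_int K = (if s < pplus a b c then of_int n * b + b else of_int n * b)"
  proof cases
    case 1
    then have "c0 b c \<le> s" using assms unfolding c0_def n_def by (simp add: algebra_simps)
    then show ?thesis using 1 assms unfolding pplus_def cmin_def by (auto simp: algebra_simps)
  next
    case 2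
    then have "s < c0 b c + a - b" using assms unfolding c0_def n_def by (simp add: algebra_simps)
    then show ?thesis using 2 assms unfolding pplus_def cmin_def by (auto simp: algebra_simps)
  qed
  then show "\<not> (pplus a b c \<le> s \<and> s < cmin a b c)"
    and "b * of_int K = (if s < pplus a b c then of_int \<lfloor>c / b\<rfloor> * b + b else of_int \<lfloor>c / b\<rfloor> * b)"
    unfolding n_def by auto
qed

lemma left_neighbour_position:
  fixes a b c s :: real and L :: int
  assumes "0 < a" "a < b" "c - a \<le> s" "s < c" "s < - b * of_int L" "- b * of_int L \<le> s + a"
  shows "\<not> (c - cmin a b c \<le> s \<and> s < c - pplus a b c)"
    and "b * of_int L = (if c - pplus a b c \<le> s then - of_int \<lfloor>c / b\<rfloor> * b - b
                         else - of_int \<lfloor>c / b\<rfloor> * b)"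
proof -
  define n where "n = \<lfloor>c / b\<rfloor>"
  have b: "0 < b" using assms by simp
  have c: "of_int n * b \<le> c" "c < of_int n * b + b"
    using floor_divide_lower[OF b, of c] floor_divide_upper[OF b, of c]
    unfolding n_def by (simp_all add: algebra_simps)
  have "b * of_int (n - 1) < b * of_int (- L)" "b * of_int (- L) < b * of_int (n + 2)"
    using assms c by (simp_all add: algebra_simps)
  then have "n - 1 < - L" "- L < n + 2"
    using b by (meson mult_less_cancel_left_pos of_int_less_iff)+
  then consider "L = - n" | "L = - n - 1" by linarith
  then have "\<not> (c - cmin a b c \<le> s \<and> s < c - pplus a b c) \<and>
    b * of_int L = (if c - pplus a b c \<le> s then - of_int n * b - b else - of_int n * b)"
  proof cases
    case 1
    then have "s < c - c0 b c" using assms unfolding c0_def n_def by (simp add: algebra_simps)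
    then show ?thesis using 1 assms unfolding pplus_def cmin_def by (auto simp: algebra_simps)
  next
    case 2
    have bL: "b * of_int L = - of_int n * b - b" unfolding 2 by (simp add: algebra_simps)
    moreover have "c0 b c = c - of_int n * b" unfolding c0_def n_def ..
    ultimately have "c - (c0 b c + a - b) \<le> s" using assms by linarith
    then show ?thesis using bL assms unfolding pplus_def cmin_def by (auto simp: algebra_simps)
  qed
  then show "\<not> (c - cmin a b c \<le> s \<and> s < c - pplus a b c)"
    and "b * of_int L = (if c - pplus a b c \<le> s then - of_int \<lfloor>c / b\<rfloor> * b - b
                         else - of_int \<lfloor>c / b\<rfloor> * b)"
    unfolding n_def by auto
qed

lemma pplus_cmin_bounds:
  assumes "0 < a" "a < b"
  shows "0 \<le> pplus a b c" "pplus a b c \<le> cmin a b c" "cmin a b c \<le> a"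
proof -
  have "0 \<le> c0 b c" "c0 b c < b"
    using floor_divide_lower[of b c] floor_divide_upper[of b c] assms
    unfolding c0_def by (simp_all add: algebra_simps)
  then show "0 \<le> pplus a b c" "pplus a b c \<le> cmin a b c" "cmin a b c \<le> a"
    using assms unfolding pplus_def cmin_def by auto
qed

lemma lam_eq:
  assumes "0 < a" "a < b" "0 \<le> t - a * of_int m" "t - a * of_int m < a"
  shows "lam a b c t = (if t - a * of_int m < pplus a b c then of_int \<lfloor>c / b\<rfloor> * b + b
                        else if t - a * of_int m < cmin a b c then 0 else of_int \<lfloor>c / b\<rfloor> * b)"
  using mem_plus_aZ_iff[of a 0 _ _ t m] pplus_cmin_bounds[OF assms(1,2), of c] assms
  unfolding lam_def by auto

lemma lamt_eq:
  assumes "0 < a" "a < b" "c - a \<le> t - a * of_int m" "t - a * of_int m < c"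
  shows "lamt a b c t = (if c - pplus a b c \<le> t - a * of_int m then - of_int \<lfloor>c / b\<rfloor> * b - b
                         else if c - cmin a b c \<le> t - a * of_int m then 0 else - of_int \<lfloor>c / b\<rfloor> * b)"
  using mem_plus_aZ_iff[of a "c - a" _ _ t m] pplus_cmin_bounds[OF assms(1,2), of c] assms
  unfolding lamt_def by auto

lemma solution_structure:
  assumes a: "0 < a" "a < b" "b < c" and x: "x \<in> Bb0" and M: "\<forall>m. Mmul a b c t x m = 1"
  obtains K L where "x K = 1" "x L = 1" "\<And>k. L < k \<Longrightarrow> k < K \<Longrightarrow> k \<noteq> 0 \<Longrightarrow> x k = 0"
    "lam a b c t = b * of_int K" "lamt a b c t = b * of_int L"
    "t \<notin> plus_aZ {pplus a b c..<cmin a b c} a" "t \<notin> plus_aZ {c - cmin a b c..<c - pplus a b c} a"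
proof -
  have xB: "x \<in> Bb" "x 0 = 1" and b: "0 < b" and "a < c" using x a by (auto simp: Bb0_def)
  obtain m where m: "0 \<le> t - a * of_int m" "t - a * of_int m < a"
    using ex_int_shift_into_interval[of a 0 t] a by auto
  obtain m' where m': "c - a \<le> t - a * of_int m'" "t - a * of_int m' < c"
    using ex_int_shift_into_interval[of a "c - a" t] a by auto
  obtain K where K: "0 < K" "x K = 1" "\<And>k. 0 < k \<Longrightarrow> k < K \<Longrightarrow> x k = 0"
      "c - (t - a * of_int m) \<le> b * of_int K" "b * of_int K < c + a - (t - a * of_int m)"
    using ex_right_neighbour[OF b \<open>a < c\<close> xB(1) M xB(2) m] by blast
  obtain L where L: "L < 0" "x L = 1" "\<And>k. L < k \<Longrightarrow> k < 0 \<Longrightarrow> x k = 0"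
      "t - a * of_int m' < - b * of_int L" "- b * of_int L \<le> t - a * of_int m' + a"
    using ex_left_neighbour[OF b \<open>a < c\<close> xB(1) M xB(2) m'] by blast
  note posK = right_neighbour_position[OF a(1,2) m K(4,5)]
  note posL = left_neighbour_position[OF a(1,2) m' L(4,5)]
  note bounds = pplus_cmin_bounds[OF a(1,2), of c]
  show ?thesis
  proof
    show "x K = 1" "x L = 1" using K(2) L(2) .
    show "x k = 0" if "L < k" "k < K" "k \<noteq> 0" for k
      using K(3) L(3) that by (cases "0 < k") auto
    show "lam a b c t = b * of_int K"
      unfolding lam_eq[OF a(1,2) m] posK(2) using posK(1) by auto
    show "lamt a b c t = b * of_int L"
      unfolding lamt_eq[OF a(1,2) m'] posL(2) using posL(1) by auto
    show "t \<notin> plus_aZ {pplus a b c..<cmin a b c} a"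
      using mem_plus_aZ_iff[of a 0 "pplus a b c" "cmin a b c" t m] a(1) m bounds posK(1) by auto
    show "t \<notin> plus_aZ {c - cmin a b c..<c - pplus a b c} a"
      using mem_plus_aZ_iff[of a "c - a" "c - cmin a b c" "c - pplus a b c" t m'] a(1) m' bounds posL(1)
      by auto
  qed
qed

theorem proposition3p6:
  fixes a b c :: real
  assumes "0 < a" "a < b" "b < c"
  shows "S_set a b c \<inter>
           plus_aZ ({pplus a b c..<cmin a b c} \<union> {c - cmin a b c..<c - pplus a b c}) a = {}
     \<and> (\<forall>t x. t \<in> S_set a b c \<and> x \<in> Bb0 \<and> (\<forall>m::int. Mmul a b c t x m = 1) \<longrightarrow>
           (\<forall>k::int. b * of_int k \<in> {lam a b c t, 0, lamt a b c t} \<longrightarrow> x k = 1) \<and>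
           (\<forall>k::int. lamt a b c t < b * of_int k \<and> b * of_int k < lam a b c t \<and> k \<noteq> 0
              \<longrightarrow> x k = 0))"
proof (intro conjI allI impI)
  show "S_set a b c \<inter>
      plus_aZ ({pplus a b c..<cmin a b c} \<union> {c - cmin a b c..<c - pplus a b c}) a = {}"
  proof (intro equals0I)
    fix t assume "t \<in> S_set a b c \<inter>
      plus_aZ ({pplus a b c..<cmin a b c} \<union> {c - cmin a b c..<c - pplus a b c}) a"
    then obtain x where "x \<in> Bb0" "\<forall>m. Mmul a b c t x m = 1"
      and t: "t \<in> plus_aZ {pplus a b c..<cmin a b c} a \<union> plus_aZ {c - cmin a b c..<c - pplus a b c} a"
      unfolding S_set_def plus_aZ_Un by blast
    from solution_structure[OF assms this(1,2)] show False using t by blast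
  qed
next
  fix t x k
  assume "t \<in> S_set a b c \<and> x \<in> Bb0 \<and> (\<forall>m::int. Mmul a b c t x m = 1)"
  then have x: "x \<in> Bb0" and M: "\<forall>m. Mmul a b c t x m = 1" by simp_all
  obtain K L where KL: "x K = 1" "x L = 1" "\<And>k. L < k \<Longrightarrow> k < K \<Longrightarrow> k \<noteq> 0 \<Longrightarrow> x k = 0"
      "lam a b c t = b * of_int K" "lamt a b c t = b * of_int L"
    using solution_structure[OF assms x M] by metis
  have x0: "x 0 = 1" using x by (simp add: Bb0_def)
  have b: "0 < b" using assms by simp
  show "x k = 1" if "b * of_int k \<in> {lam a b c t, 0, lamt a b c t}"
    using that KL x0 b by auto
  show "x k = 0" if "lamt a b c t < b * of_int k \<and> b * of_int k < lam a b c t \<and> k \<noteq> 0"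
    using that KL(3-5) b by (simp add: mult_less_cancel_left_pos)
qed

end
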